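(* Let $n\geq4$ and let $U$ be a monomial. Then $x_{n-1}^2U\in G(J(P_n)^2)$ if and only if $U\in G(J(P_{n-2})^2)$.
   Context: For $m\geq1$, $P_m$ is the path graph on vertices $x_1,\ldots,x_m$ with edges $\{x_i,x_{i+1}\}$; $J(P_m)$ is its cover ideal in a polynomial ring over a field, generated by the monomials $\prod_{x\in C}x$ with $C$ a minimal vertex cover of $P_m$; $G(I)$ denotes the set of minimal monomial generators of a monomial ideal $I$. *)

theory Defs
  imports Main
begin

text \<open>Monomials in the variables x_1, x_2, ... are represented by their exponent
vectors: a monomial U is a function nat => nat, U i being the exponent of x_i.  A monomial ideal is represented by the set of monomials
it contains.\<close>

type_synonym monomial = "nat \<Rightarrow> nat"

definition mdvd :: "monomial \<Rightarrow> monomial \<Rightarrow> bool" where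
  "mdvd u v \<longleftrightarrow> (\<forall>i. u i \<le> v i)"

definition mmult :: "monomial \<Rightarrow> monomial \<Rightarrow> monomial" where
  "mmult u v = (\<lambda>i. u i + v i)"

definition xpow :: "nat \<Rightarrow> nat \<Rightarrow> monomial" where
  "xpow i k = (\<lambda>j. if j = i then k else 0)"

definition mon_of_set :: "nat set \<Rightarrow> monomial" where
  "mon_of_set C = (\<lambda>i. if i \<in> C then 1 else 0)"

definition mideal :: "monomial set \<Rightarrow> monomial set" where
  "mideal S = {w. \<exists>s\<in>S. mdvd s w}"

definition mideal_prod :: "monomial set \<Rightarrow> monomial set \<Rightarrow> monomial set" where
  "mideal_prod I J = mideal {mmult u v | u v. u \<in> I \<and> v \<in> J}"

definition min_gens :: "monomial set \<Rightarrow> monomial set" where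
  "min_gens I = {w \<in> I. \<forall>w'\<in>I. mdvd w' w \<longrightarrow> w' = w}"

definition path_edges :: "nat \<Rightarrow> nat set set" where
  "path_edges m = {{i, Suc i} | i. 1 \<le> i \<and> Suc i \<le> m}"

definition is_vertex_cover :: "nat \<Rightarrow> nat set \<Rightarrow> bool" where
  "is_vertex_cover m C \<longleftrightarrow> C \<subseteq> {1..m} \<and> (\<forall>e\<in>path_edges m. e \<inter> C \<noteq> {})"

definition is_min_vertex_cover :: "nat \<Rightarrow> nat set \<Rightarrow> bool" where
  "is_min_vertex_cover m C \<longleftrightarrow> is_vertex_cover m C \<and> (\<forall>D. D \<subset> C \<longrightarrow> \<not> is_vertex_cover m D)"

definition cover_ideal :: "nat \<Rightarrow> monomial set" where
  "cover_ideal m = mideal (mon_of_set ` {C. is_min_vertex_cover m C})"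

end

theory Submission
  imports Defs
begin

text \<open>Write n = m + 2. A minimal vertex cover of P_(m+2) avoiding x_(m+2) must contain x_(m+1)
to cover the last edge, and removing x_(m+1) from it leaves a minimal vertex cover of P_m;
conversely adding x_(m+1) to a minimal vertex cover of P_m gives one of P_(m+2). Hence
multiplication by x_(m+1)^2 maps the products of two minimal covers of P_m bijectively onto the
products of two minimal covers of P_(m+2) that are not divisible by x_(m+2). A product in
which x_(m+1) occurs squared comes from two covers containing x_(m+1), so by minimality it is
not divisible by x_(m+2), and neither is anything dividing it. Since multiplication by a fixed
monomial preserves and reflects divisibility, it therefore matches the minimal elements on
both sides.\<close>

lemma mdvd_refl: "mdvd u u"
  unfolding mdvd_def by simp

lemma mdvd_trans: "mdvd u v \<Longrightarrow> mdvd v w \<Longrightarrow> mdvd u w"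
  unfolding mdvd_def using le_trans by blast

lemma mdvd_antisym: "mdvd u v \<Longrightarrow> mdvd v u \<Longrightarrow> u = v"
  unfolding mdvd_def by (simp add: fun_eq_iff le_antisym)

lemma mdvd_mmult_mono: "mdvd u u' \<Longrightarrow> mdvd v v' \<Longrightarrow> mdvd (mmult u v) (mmult u' v')"
  unfolding mdvd_def mmult_def by (simp add: add_mono)

lemma mdvd_mmult_cancel_left [simp]: "mdvd (mmult a u) (mmult a v) \<longleftrightarrow> mdvd u v"
  unfolding mdvd_def mmult_def by simp

lemma mmult_cancel_left [simp]: "mmult a u = mmult a v \<longleftrightarrow> u = v"
  unfolding mmult_def by (simp add: fun_eq_iff)

lemma subset_mideal: "S \<subseteq> mideal S"
  unfolding mideal_def using mdvd_refl by blast

lemma mideal_prod_mideal: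
  "mideal_prod (mideal S) (mideal T) = mideal {mmult s t | s t. s \<in> S \<and> t \<in> T}"
proof (intro equalityI subsetI)
  fix w assume "w \<in> mideal_prod (mideal S) (mideal T)"
  then obtain u v where uv: "u \<in> mideal S" "v \<in> mideal T" "mdvd (mmult u v) w"
    unfolding mideal_prod_def mideal_def by blast
  then obtain s t where "s \<in> S" "mdvd s u" "t \<in> T" "mdvd t v"
    unfolding mideal_def by blast
  then have "mdvd (mmult s t) w" "mmult s t \<in> {mmult s t | s t. s \<in> S \<and> t \<in> T}"
    using uv(3) mdvd_mmult_mono mdvd_trans by blast+
  then show "w \<in> mideal {mmult s t | s t. s \<in> S \<and> t \<in> T}"
    unfolding mideal_def by blast
next
  fix w assume "w \<in> mideal {mmult s t | s t. s \<in> S \<and> t \<in> T}"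
  then obtain s t where st: "s \<in> S" "t \<in> T" "mdvd (mmult s t) w"
    unfolding mideal_def by blast
  then have "mmult s t \<in> {mmult u v | u v. u \<in> mideal S \<and> v \<in> mideal T}"
    using subset_mideal by blast
  with st(3) show "w \<in> mideal_prod (mideal S) (mideal T)"
    unfolding mideal_prod_def mideal_def by blast
qed

lemma min_gens_mideal: "min_gens (mideal S) = min_gens S"
proof (intro equalityI subsetI)
  fix w assume w: "w \<in> min_gens (mideal S)"
  then obtain s where "s \<in> S" "mdvd s w"
    unfolding min_gens_def mideal_def by blast
  with w show "w \<in> min_gens S"
    unfolding min_gens_def using subset_mideal by blast
next
  fix w assume w: "w \<in> min_gens S"
  have "w' = w" if w': "w' \<in> mideal S" "mdvd w' w" for w'
  proof -
    obtain s where "s \<in> S" "mdvd s w'"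
      using w'(1) unfolding mideal_def by blast
    then have "s = w"
      using w w'(2) mdvd_trans unfolding min_gens_def by blast
    then show ?thesis
      using \<open>mdvd s w'\<close> w'(2) mdvd_antisym by blast
  qed
  then show "w \<in> min_gens (mideal S)"
    using w subset_mideal unfolding min_gens_def by blast
qed

lemma min_gens_image_mmult_iff:
  assumes "mmult a ` P \<subseteq> Q"
    and "\<forall>q\<in>Q. mdvd q (mmult a u) \<longrightarrow> q \<in> mmult a ` P"
  shows "mmult a u \<in> min_gens Q \<longleftrightarrow> u \<in> min_gens P"
proof
  assume au: "mmult a u \<in> min_gens Q"
  then have "u \<in> P"
    using assms(2) mdvd_refl unfolding min_gens_def by auto
  moreover have "p = u" if "p \<in> P" "mdvd p u" for p
  proof -
    have "mmult a p \<in> Q" "mdvd (mmult a p) (mmult a u)"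
      using assms(1) that by auto
    then show ?thesis
      using au unfolding min_gens_def by auto
  qed
  ultimately show "u \<in> min_gens P"
    unfolding min_gens_def by blast
next
  assume u: "u \<in> min_gens P"
  then have "mmult a u \<in> Q"
    using assms(1) unfolding min_gens_def by blast
  moreover have "q = mmult a u" if "q \<in> Q" "mdvd q (mmult a u)" for q
    using u assms(2) that unfolding min_gens_def by auto
  ultimately show "mmult a u \<in> min_gens Q"
    unfolding min_gens_def by blast
qed

lemma path_edges_iff: "e \<in> path_edges m \<longleftrightarrow> (\<exists>i. e = {i, Suc i} \<and> 1 \<le> i \<and> Suc i \<le> m)"
  unfolding path_edges_def by simp

lemma path_edge_last: "{Suc m, Suc (Suc m)} \<in> path_edges (Suc (Suc m))"
  unfolding path_edges_iff by auto

lemma path_edges_Suc_Suc: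
  assumes "e \<in> path_edges m"
  shows "e \<in> path_edges (Suc (Suc m))" "Suc m \<notin> e" "Suc (Suc m) \<notin> e"
  using assms unfolding path_edges_iff by auto

lemma vertex_cover_last_edge:
  assumes "is_vertex_cover (Suc (Suc m)) C"
  shows "Suc m \<in> C \<or> Suc (Suc m) \<in> C"
proof -
  have "{Suc m, Suc (Suc m)} \<inter> C \<noteq> {}"
    using assms path_edge_last unfolding is_vertex_cover_def by blast
  then show ?thesis by auto
qed

lemma vertex_cover_restrict:
  assumes "is_vertex_cover (Suc (Suc m)) C"
  shows "is_vertex_cover m (C - {Suc m, Suc (Suc m)})"
  unfolding is_vertex_cover_def
proof (intro conjI ballI)
  show "C - {Suc m, Suc (Suc m)} \<subseteq> {1..m}"
    using assms unfolding is_vertex_cover_def by auto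
next
  fix e assume e: "e \<in> path_edges m"
  then have "e \<inter> C \<noteq> {}"
    using assms path_edges_Suc_Suc(1) unfolding is_vertex_cover_def by blast
  then show "e \<inter> (C - {Suc m, Suc (Suc m)}) \<noteq> {}"
    using path_edges_Suc_Suc(2,3)[OF e] by blast
qed

lemma vertex_cover_insert_Suc:
  assumes "is_vertex_cover m D"
  shows "is_vertex_cover (Suc (Suc m)) (insert (Suc m) D)"
  unfolding is_vertex_cover_def
proof (intro conjI ballI)
  show "insert (Suc m) D \<subseteq> {1..Suc (Suc m)}"
    using assms unfolding is_vertex_cover_def by auto
next
  fix e assume "e \<in> path_edges (Suc (Suc m))"
  then obtain i where i: "e = {i, Suc i}" "1 \<le> i" "Suc i \<le> Suc (Suc m)"
    unfolding path_edges_iff by blast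
  show "e \<inter> insert (Suc m) D \<noteq> {}"
  proof (cases "Suc i \<le> m")
    case True
    then have "e \<in> path_edges m"
      using i unfolding path_edges_iff by blast
    then show ?thesis
      using assms unfolding is_vertex_cover_def by blast
  next
    case False
    then show ?thesis using i by auto
  qed
qed

lemma min_vertex_cover_is_cover: "is_min_vertex_cover m C \<Longrightarrow> is_vertex_cover m C"
  unfolding is_min_vertex_cover_def by simp

lemma min_vertex_cover_subset: "is_min_vertex_cover m C \<Longrightarrow> C \<subseteq> {1..m}"
  unfolding is_min_vertex_cover_def is_vertex_cover_def by simp

lemma min_vertex_cover_minimal:
  "is_min_vertex_cover m C \<Longrightarrow> D \<subset> C \<Longrightarrow> \<not> is_vertex_cover m D"
  unfolding is_min_vertex_cover_def by simp

lemma min_vertex_cover_not_last: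
  assumes min: "is_min_vertex_cover (Suc (Suc m)) C" and "Suc m \<in> C"
  shows "Suc (Suc m) \<notin> C"
proof
  assume "Suc (Suc m) \<in> C"
  then have smaller: "C - {Suc (Suc m)} \<subset> C" by blast
  have "insert (Suc m) (C - {Suc m, Suc (Suc m)}) = C - {Suc (Suc m)}"
    using \<open>Suc m \<in> C\<close> by auto
  moreover have "is_vertex_cover (Suc (Suc m)) (insert (Suc m) (C - {Suc m, Suc (Suc m)}))"
    using min by (intro vertex_cover_insert_Suc vertex_cover_restrict min_vertex_cover_is_cover)
  ultimately show False
    using min_vertex_cover_minimal[OF min smaller] by simp
qed

lemma min_vertex_cover_Diff_Suc:
  assumes min: "is_min_vertex_cover (Suc (Suc m)) C" and "Suc m \<in> C"
  shows "is_min_vertex_cover m (C - {Suc m})"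
proof -
  have "C - {Suc m} = C - {Suc m, Suc (Suc m)}"
    using min_vertex_cover_not_last[OF assms] by blast
  then have "is_vertex_cover m (C - {Suc m})"
    using min by (simp add: vertex_cover_restrict min_vertex_cover_is_cover)
  moreover have "\<not> is_vertex_cover m D" if "D \<subset> C - {Suc m}" for D
  proof
    assume "is_vertex_cover m D"
    then have "is_vertex_cover (Suc (Suc m)) (insert (Suc m) D)"
      by (rule vertex_cover_insert_Suc)
    moreover have "insert (Suc m) D \<subset> C"
      using that \<open>Suc m \<in> C\<close> by blast
    ultimately show False
      using min_vertex_cover_minimal[OF min] by blast
  qed
  ultimately show ?thesis
    unfolding is_min_vertex_cover_def by blast
qed

lemma min_vertex_cover_insert_Suc:
  assumes min: "is_min_vertex_cover m D"
  shows "is_min_vertex_cover (Suc (Suc m)) (insert (Suc m) D)"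
proof -
  have D: "D \<subseteq> {1..m}"
    using min by (rule min_vertex_cover_subset)
  have "\<not> is_vertex_cover (Suc (Suc m)) E" if E: "E \<subset> insert (Suc m) D" for E
  proof
    assume cover: "is_vertex_cover (Suc (Suc m)) E"
    have "Suc (Suc m) \<notin> insert (Suc m) D"
      using D by auto
    then have "Suc (Suc m) \<notin> E"
      using E by blast
    then have "Suc m \<in> E"
      using vertex_cover_last_edge[OF cover] by blast
    then have "E - {Suc m, Suc (Suc m)} \<subset> D"
      using E D by auto
    moreover have "is_vertex_cover m (E - {Suc m, Suc (Suc m)})"
      using cover by (rule vertex_cover_restrict)
    ultimately show False
      using min_vertex_cover_minimal[OF min] by blast
  qed
  moreover have "is_vertex_cover (Suc (Suc m)) (insert (Suc m) D)"
    using min by (intro vertex_cover_insert_Suc min_vertex_cover_is_cover)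
  ultimately show ?thesis
    unfolding is_min_vertex_cover_def by blast
qed

definition cover_prods :: "nat \<Rightarrow> monomial set" where
  "cover_prods m = {mmult (mon_of_set C) (mon_of_set D) | C D.
      is_min_vertex_cover m C \<and> is_min_vertex_cover m D}"

lemma min_gens_cover_ideal_sq:
  "min_gens (mideal_prod (cover_ideal m) (cover_ideal m)) = min_gens (cover_prods m)"
proof -
  have "{mmult s t | s t. s \<in> mon_of_set ` Collect (is_min_vertex_cover m)
          \<and> t \<in> mon_of_set ` Collect (is_min_vertex_cover m)} = cover_prods m"
    unfolding cover_prods_def by blast
  then show ?thesis
    unfolding cover_ideal_def mideal_prod_mideal min_gens_mideal by simp
qed

lemma cover_prods_vanish:
  assumes "p \<in> cover_prods m" "m < i"
  shows "p i = 0"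
proof -
  obtain C D where "C \<subseteq> {1..m}" "D \<subseteq> {1..m}"
    "p = mmult (mon_of_set C) (mon_of_set D)"
    using assms(1) min_vertex_cover_subset unfolding cover_prods_def by blast
  then show ?thesis
    using assms(2) unfolding mmult_def mon_of_set_def by auto
qed

lemma mmult_xpow_mon_of_set:
  assumes "k \<notin> C" "k \<notin> D"
  shows "mmult (xpow k 2) (mmult (mon_of_set C) (mon_of_set D))
    = mmult (mon_of_set (insert k C)) (mon_of_set (insert k D))"
  using assms by (auto simp: fun_eq_iff mmult_def xpow_def mon_of_set_def)

lemma cover_prods_lift:
  assumes "q \<in> cover_prods m"
  shows "mmult (xpow (Suc m) 2) q \<in> cover_prods (Suc (Suc m))"
proof -
  obtain C D where min: "is_min_vertex_cover m C" "is_min_vertex_cover m D"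
    and q: "q = mmult (mon_of_set C) (mon_of_set D)"
    using assms unfolding cover_prods_def by blast
  then have "Suc m \<notin> C" "Suc m \<notin> D"
    using min_vertex_cover_subset by fastforce+
  then have "mmult (xpow (Suc m) 2) q
      = mmult (mon_of_set (insert (Suc m) C)) (mon_of_set (insert (Suc m) D))"
    unfolding q by (rule mmult_xpow_mon_of_set)
  moreover have "is_min_vertex_cover (Suc (Suc m)) (insert (Suc m) C)"
    "is_min_vertex_cover (Suc (Suc m)) (insert (Suc m) D)"
    using min by (auto intro: min_vertex_cover_insert_Suc)
  ultimately show ?thesis
    unfolding cover_prods_def by blast
qed

lemma cover_prods_Suc_Suc_vanishing:
  assumes "p \<in> cover_prods (Suc (Suc m))" "p (Suc (Suc m)) = 0"
  shows "p \<in> mmult (xpow (Suc m) 2) ` cover_prods m"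
proof -
  obtain C D where min: "is_min_vertex_cover (Suc (Suc m)) C" "is_min_vertex_cover (Suc (Suc m)) D"
    and p: "p = mmult (mon_of_set C) (mon_of_set D)"
    using assms(1) unfolding cover_prods_def by blast
  then have "Suc (Suc m) \<notin> C" "Suc (Suc m) \<notin> D"
    using assms(2) by (auto simp: mmult_def mon_of_set_def)
  then have "Suc m \<in> C" "Suc m \<in> D"
    using min vertex_cover_last_edge min_vertex_cover_is_cover by blast+
  then have "p = mmult (xpow (Suc m) 2) (mmult (mon_of_set (C - {Suc m})) (mon_of_set (D - {Suc m})))"
    unfolding p by (subst mmult_xpow_mon_of_set) (auto simp: insert_absorb)
  moreover have "mmult (mon_of_set (C - {Suc m})) (mon_of_set (D - {Suc m})) \<in> cover_prods m"
    unfolding cover_prods_def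
    using min_vertex_cover_Diff_Suc min \<open>Suc m \<in> C\<close> \<open>Suc m \<in> D\<close> by blast
  ultimately show ?thesis by blast
qed

lemma cover_prods_Suc_Suc_square:
  assumes "p \<in> cover_prods (Suc (Suc m))" "2 \<le> p (Suc m)"
  shows "p (Suc (Suc m)) = 0"
proof -
  obtain C D where min: "is_min_vertex_cover (Suc (Suc m)) C" "is_min_vertex_cover (Suc (Suc m)) D"
    and p: "p = mmult (mon_of_set C) (mon_of_set D)"
    using assms(1) unfolding cover_prods_def by blast
  then have "Suc m \<in> C" "Suc m \<in> D"
    using assms(2) by (auto simp: mmult_def mon_of_set_def split: if_splits)
  then have "Suc (Suc m) \<notin> C" "Suc (Suc m) \<notin> D"
    using min min_vertex_cover_not_last by blast+
  then show ?thesis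
    unfolding p by (simp add: mmult_def mon_of_set_def)
qed

theorem lemma3p8:
  fixes n :: nat and U :: monomial
  assumes "n \<ge> 4"
    and "\<forall>i. U i \<noteq> 0 \<longrightarrow> i \<in> {1..n}"
  shows "mmult (xpow (n - 1) 2) U \<in> min_gens (mideal_prod (cover_ideal n) (cover_ideal n))
     \<longleftrightarrow> U \<in> min_gens (mideal_prod (cover_ideal (n - 2)) (cover_ideal (n - 2)))"
proof -
  define m where "m = n - 2"
  have n: "n = Suc (Suc m)"
    using assms(1) unfolding m_def by simp
  let ?a = "xpow (Suc m) 2"
  have "mmult ?a U \<in> min_gens (cover_prods (Suc (Suc m))) \<longleftrightarrow> U \<in> min_gens (cover_prods m)"
  proof (cases "U (Suc (Suc m)) = 0")
    case True
    have "p \<in> mmult ?a ` cover_prods m"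
      if "p \<in> cover_prods (Suc (Suc m))" "mdvd p (mmult ?a U)" for p
    proof -
      have "p (Suc (Suc m)) \<le> U (Suc (Suc m))"
        using that(2) unfolding mdvd_def mmult_def xpow_def by (metis n_not_Suc_n add_0)
      then show ?thesis
        using True that(1) cover_prods_Suc_Suc_vanishing by simp
    qed
    then show ?thesis
      using cover_prods_lift by (intro min_gens_image_mmult_iff) auto
  next
    case False
    then have "mmult ?a U \<notin> cover_prods (Suc (Suc m))" "U \<notin> cover_prods m"
      using cover_prods_Suc_Suc_square cover_prods_vanish
      by (fastforce simp: mmult_def xpow_def)+
    then show ?thesis
      unfolding min_gens_def by blast
  qed
  then show ?thesis
    unfolding min_gens_cover_ideal_sq n by simp
qed

end
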